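(* Let $A\in\mathbb R^{n_x\times n_x}$, $B\in\mathbb R^{n_x\times n_u}$, $E\in\mathbb R^{n_x\times n_w}$, $C\in\mathbb R^{n_y\times n_x}$ define the stochastic system $X_{k+1}=AX_k+BU_k+EW_k$, $Y_k=CX_k$, with i.i.d. process disturbances $W_k\in\mathcal L^2$ of known distribution. Assume that $(A,B)$ is controllable and $(A,C)$ is observable, and let $T_{\mathrm{ini}}$ be an integer not smaller than the lag of $(A,C)$. Assume this state-space model is equivalent to the VARX model $$Y_k=\hat A\,Y_{[k-T_{\mathrm{ini}},k-1]}+\hat B\,U_{[k-T_{\mathrm{ini}},k-1]}+W_{k-1},$$ with $\hat A\in\mathbb R^{n_y\times T_{\mathrm{ini}}n_y}$, $\hat B\in\mathbb R^{n_y\times T_{\mathrm{ini}}n_u}$ and $W_k\in\mathcal L^2(\mathbb R^{n_y})$. Let $(u^{\mathrm{ud}},y^{\mathrm{ud}})_{[1-T_{\mathrm{ini}},T]}$ be recorded real input-output data of the undisturbed system, i.e. $y^{\mathrm{ud}}_k=\hat A\,y^{\mathrm{ud}}_{[k-T_{\mathrm{ini}},k-1]}+\hat B\,u^{\mathrm{ud}}_{[k-T_{\mathrm{ini}},k-1]}$ for all $k\in\mathbb I_{[1,T]}$, and let $N\in\mathbb N^+$ be such that $$\operatorname{rank}\begin{bmatrix}\mathcal H_{T_{\mathrm{ini}}+N}(u^{\mathrm{ud}}_{[1,T]})\\ \mathcal H_{T_{\mathrm{ini}}}(y^{\mathrm{ud}}_{[1,T-N]})\end{bmatrix}=(T_{\mathrm{ini}}+N)n_u+T_{\mathrm{ini}}n_y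 .$$ Then a real sequence $(u,y)_{[1-T_{\mathrm{ini}},N]}$ satisfies the undisturbed dynamics $y_k=\hat A\,y_{[k-T_{\mathrm{ini}},k-1]}+\hat B\,u_{[k-T_{\mathrm{ini}},k-1]}$ for all $k\in\mathbb I_{[1,N]}$ if and only if there exists $g\in\mathbb R^{T-N-T_{\mathrm{ini}}+1}$ such that $$\begin{bmatrix}\mathcal H_{T_{\mathrm{ini}}+N}(u^{\mathrm{ud}}_{[1,T]})\\ \mathcal H_{T_{\mathrm{ini}}+N}(y^{\mathrm{ud}}_{[1,T]})\end{bmatrix}g=\begin{bmatrix}u_{[1-T_{\mathrm{ini}},N]}\\ y_{[1-T_{\mathrm{ini}},N]}\end{bmatrix}.$$
   Context: $\mathcal L^2(\mathbb R^n)$ denotes $\mathbb R^n$-valued random variables with finite second moments on a probability space. $\mathbb I_{[a,b]}=\{a,a+1,\dots,b\}$; for a sequence $z$, $z_{[a,b]}=[z_a^\top,\dots,z_b^\top]^\top$. For a sequence $z_{[a,b]}$ with $z_k\in\mathbb R^n$ and $M\le b-a+1$, the Hankel matrix $\mathcal H_M(z_{[a,b]})$ is the $Mn\times(b-a-M+2)$ block matrix whose $(r,c)$ block is $z_{a+r+c-2}$. The lag of an observable pair $(A,C)$ is the smallest $\ell$ such that $[C^\top,(CA)^\top,\dots,(CA^{\ell-1})^\top]^\top$ has full column rank. *)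

theory Defs
  imports "Jordan_Normal_Form.DL_Rank"
begin

(* Stacked vector z_[a,b] of a sequence of n-dimensional vectors (empty if b < a). *)
definition stack :: "nat \<Rightarrow> (int \<Rightarrow> real vec) \<Rightarrow> int \<Rightarrow> int \<Rightarrow> real vec" where
  "stack n z a b = vec (nat (b - a + 1) * n) (\<lambda>i. z (a + int (i div n)) $ (i mod n))"

(* Hankel matrix H_M(z_[a,b]): (M n) x (b - a - M + 2), block (r,c) = z_{a+r+c-2} (1-based). *)
definition hankel :: "nat \<Rightarrow> nat \<Rightarrow> (int \<Rightarrow> real vec) \<Rightarrow> int \<Rightarrow> int \<Rightarrow> real mat" where
  "hankel n M z a b = mat (M * n) (nat (b - a + 2 - int M))
     (\<lambda>(i, j). z (a + int (i div n) + int j) $ (i mod n))"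

definition vstack :: "real mat \<Rightarrow> real mat \<Rightarrow> real mat" where
  "vstack P Q = mat (dim_row P + dim_row Q) (dim_col P)
     (\<lambda>(i, j). if i < dim_row P then P $$ (i, j) else Q $$ (i - dim_row P, j))"

definition mrank :: "nat \<Rightarrow> real mat \<Rightarrow> nat" where
  "mrank nr M = vec_space.rank nr M"

definition ctrb_mat :: "nat \<Rightarrow> nat \<Rightarrow> real mat \<Rightarrow> real mat \<Rightarrow> real mat" where
  "ctrb_mat nx nu A B = mat nx (nx * nu) (\<lambda>(i, j). (A ^\<^sub>m (j div nu) * B) $$ (i, j mod nu))"

definition controllable :: "nat \<Rightarrow> nat \<Rightarrow> real mat \<Rightarrow> real mat \<Rightarrow> bool" where
  "controllable nx nu A B \<longleftrightarrow> mrank nx (ctrb_mat nx nu A B) = nx"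

definition obs_mat :: "nat \<Rightarrow> nat \<Rightarrow> nat \<Rightarrow> real mat \<Rightarrow> real mat \<Rightarrow> real mat" where
  "obs_mat nx ny l A C = mat (l * ny) nx (\<lambda>(i, j). (C * A ^\<^sub>m (i div ny)) $$ (i mod ny, j))"

definition obs_full_col_rank :: "nat \<Rightarrow> nat \<Rightarrow> nat \<Rightarrow> real mat \<Rightarrow> real mat \<Rightarrow> bool" where
  "obs_full_col_rank nx ny l A C \<longleftrightarrow> mrank (l * ny) (obs_mat nx ny l A C) = nx"

definition observable :: "nat \<Rightarrow> nat \<Rightarrow> real mat \<Rightarrow> real mat \<Rightarrow> bool" where
  "observable nx ny A C \<longleftrightarrow> obs_full_col_rank nx ny nx A C"

definition lag :: "nat \<Rightarrow> nat \<Rightarrow> real mat \<Rightarrow> real mat \<Rightarrow> nat" where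
  "lag nx ny A C = (LEAST l. obs_full_col_rank nx ny l A C)"

definition varx_step :: "nat \<Rightarrow> nat \<Rightarrow> nat \<Rightarrow> real mat \<Rightarrow> real mat
    \<Rightarrow> (int \<Rightarrow> real vec) \<Rightarrow> (int \<Rightarrow> real vec) \<Rightarrow> int \<Rightarrow> bool" where
  "varx_step nu ny Tini Ahat Bhat u y k \<longleftrightarrow>
     y k = Ahat *\<^sub>v stack ny y (k - int Tini) (k - 1) + Bhat *\<^sub>v stack nu u (k - int Tini) (k - 1)"

end

theory Submission
  imports Defs
begin

text \<open>
  Column j of the stacked Hankel matrix is the data window shifted by j, and every shift of
  the recorded data satisfies the VARX recursion. Since the recursion is linear, the trajectory
  encoded by any Hankel combination g is again a VARX trajectory, which gives one direction.
  Conversely, the rank condition makes the map sending g to the inputs on the whole horizon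
  and the outputs on the initial window surjective; a VARX trajectory is determined by these
  data, because each output is computed from the preceding window, so it is encoded by some g.
\<close>

lemma mult_mat_vec_nth_sum:
  fixes M :: "real mat"
  assumes "M \<in> carrier_mat r d" "v \<in> carrier_vec d" "i < r"
  shows "(M *\<^sub>v v) $ i = (\<Sum>l<d. M $$ (i, l) * v $ l)"
  using assms by (simp add: scalar_prod_def atLeast0LessThan)

lemma mult_mat_vec_nth_lincomb:
  fixes M :: "real mat"
  assumes M: "M \<in> carrier_mat r d" and w: "w \<in> carrier_vec d"
    and v: "\<And>j. j \<in> J \<Longrightarrow> v j \<in> carrier_vec d"
    and w_eq: "\<And>l. l < d \<Longrightarrow> w $ l = (\<Sum>j\<in>J. c j * v j $ l)" and i: "i < r"
  shows "(M *\<^sub>v w) $ i = (\<Sum>j\<in>J. c j * (M *\<^sub>v v j) $ i)"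
proof -
  have "(M *\<^sub>v w) $ i = (\<Sum>l<d. \<Sum>j\<in>J. c j * (M $$ (i, l) * v j $ l))"
    using mult_mat_vec_nth_sum[OF M w i] w_eq by (simp add: sum_distrib_left mult.left_commute)
  also have "\<dots> = (\<Sum>j\<in>J. c j * (\<Sum>l<d. M $$ (i, l) * v j $ l))"
    by (subst sum.swap) (simp add: sum_distrib_left)
  also have "\<dots> = (\<Sum>j\<in>J. c j * (M *\<^sub>v v j) $ i)"
    using mult_mat_vec_nth_sum[OF M v i] by simp
  finally show ?thesis .
qed

lemma mrank_le_dim_col:
  fixes M :: "real mat"
  assumes "M \<in> carrier_mat n nc"
  shows "mrank n M \<le> nc"
  unfolding mrank_def using vec_space.rank_le_nc[OF assms] .

lemma mrank_full_row_surj: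
  fixes M :: "real mat"
  assumes M: "M \<in> carrier_mat n nc" and r: "mrank n M = n" and v: "v \<in> carrier_vec n"
  shows "\<exists>g \<in> carrier_vec nc. M *\<^sub>v g = v"
proof -
  interpret vec_space "TYPE(real)" n .
  obtain S where S: "maximal S (\<lambda>T. T \<subseteq> set (cols M) \<and> lin_indpt T)"
    using maximal_exists[of "\<lambda>T. T \<subseteq> set (cols M) \<and> lin_indpt T" "card (set (cols M))" "{}"]
    by (meson List.finite_set card_mono empty_iff empty_subsetI finite_lin_indpt2 rev_finite_subset)
  have S_cols: "S \<subseteq> set (cols M)" and S_indpt: "lin_indpt S"
    using S unfolding maximal_def by auto
  have "card S = n"
    using rank_card_indpt[OF M S] r unfolding mrank_def by simp
  moreover have "set (cols M) \<subseteq> carrier_vec n"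
    using M cols_dim by blast
  ultimately have "basis S"
    using S_cols S_indpt finite_subset dim_is_n by (intro dim_li_is_basis) auto
  hence "v \<in> span (set (cols M))"
    using span_is_monotone[OF S_cols] v unfolding basis_def by auto
  thus ?thesis
    using col_space_eq[OF M] M unfolding col_space_def by auto
qed

lemma dim_stack [simp]: "dim_vec (stack n z a b) = nat (b - a + 1) * n"
  unfolding stack_def by simp

lemma stack_carrier: "stack n z a b \<in> carrier_vec (nat (b - a + 1) * n)"
  by (simp add: carrier_vecI)

lemma stack_nth_index:
  assumes "l < nat (b - a + 1) * n"
  shows "a + int (l div n) \<in> {a..b}" "l mod n < n"
proof -
  have "l div n < nat (b - a + 1)"
    using assms by (simp add: less_mult_imp_div_less)
  thus "a + int (l div n) \<in> {a..b}" by auto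
  show "l mod n < n"
    using assms by (cases n) auto
qed

lemma stack_cong:
  assumes "\<And>m. m \<in> {a..b} \<Longrightarrow> z m = z' m"
  shows "stack n z a b = stack n z' a b"
  using assms stack_nth_index(1) unfolding stack_def by (intro eq_vecI) auto

lemma stack_eqD:
  assumes eq: "stack n z a b = stack n z' a b" and m: "m \<in> {a..b}"
    and dims: "z m \<in> carrier_vec n" "z' m \<in> carrier_vec n"
  shows "z m = z' m"
proof (rule eq_vecI)
  fix i assume "i < dim_vec (z' m)"
  hence i: "i < n" using dims by simp
  define l where "l = nat (m - a) * n + i"
  have "(nat (m - a) + 1) * n \<le> nat (b - a + 1) * n"
    using m by (intro mult_le_mono1) auto
  hence "l < nat (b - a + 1) * n"
    using i unfolding l_def by simp
  moreover have "l div n = nat (m - a)" "l mod n = i"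
    using i unfolding l_def by auto
  ultimately show "z m $ i = z' m $ i"
    using arg_cong[OF eq, of "\<lambda>v. v $ l"] m unfolding stack_def by simp
qed (use dims in simp)

lemma stack_shift: "stack n (\<lambda>m. z (m + s)) a b = stack n z (a + s) (b + s)"
  unfolding stack_def by (simp add: algebra_simps)

lemma vstack_carrier:
  assumes "P \<in> carrier_mat r1 nc" "Q \<in> carrier_mat r2 nc"
  shows "vstack P Q \<in> carrier_mat (r1 + r2) nc"
  using assms unfolding vstack_def by auto

lemma vstack_mult_vec:
  fixes P Q :: "real mat"
  assumes P: "P \<in> carrier_mat r1 nc" and Q: "Q \<in> carrier_mat r2 nc" and g: "g \<in> carrier_vec nc"
  shows "vstack P Q *\<^sub>v g = (P *\<^sub>v g) @\<^sub>v (Q *\<^sub>v g)"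
proof (rule eq_vecI)
  fix i assume "i < dim_vec ((P *\<^sub>v g) @\<^sub>v (Q *\<^sub>v g))"
  hence i: "i < r1 + r2" using P Q by simp
  have "(vstack P Q *\<^sub>v g) $ i = (\<Sum>l<nc. vstack P Q $$ (i, l) * g $ l)"
    by (rule mult_mat_vec_nth_sum[OF vstack_carrier[OF P Q] g i])
  also have "\<dots> = (if i < r1 then (\<Sum>l<nc. P $$ (i, l) * g $ l) else (\<Sum>l<nc. Q $$ (i - r1, l) * g $ l))"
    using i P Q by (auto simp: vstack_def)
  also have "\<dots> = ((P *\<^sub>v g) @\<^sub>v (Q *\<^sub>v g)) $ i"
    using i P Q g by (auto simp: scalar_prod_def atLeast0LessThan)
  finally show "(vstack P Q *\<^sub>v g) $ i = ((P *\<^sub>v g) @\<^sub>v (Q *\<^sub>v g)) $ i" .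
qed (use P Q in \<open>simp add: vstack_def\<close>)

definition seq_lincomb :: "nat \<Rightarrow> nat set \<Rightarrow> (nat \<Rightarrow> real) \<Rightarrow> (nat \<Rightarrow> int \<Rightarrow> real vec) \<Rightarrow> int \<Rightarrow> real vec"
  where "seq_lincomb n J c Z m = vec n (\<lambda>i. \<Sum>j\<in>J. c j * Z j m $ i)"

lemma seq_lincomb_carrier: "seq_lincomb n J c Z m \<in> carrier_vec n"
  unfolding seq_lincomb_def by simp

lemma stack_seq_lincomb_nth:
  assumes "l < nat (b - a + 1) * n"
  shows "stack n (seq_lincomb n J c Z) a b $ l = (\<Sum>j\<in>J. c j * stack n (Z j) a b $ l)"
  using assms stack_nth_index(2)[OF assms] unfolding stack_def seq_lincomb_def by simp

lemma varx_step_shift: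
  "varx_step nu ny Tini Ahat Bhat (\<lambda>m. u (m + s)) (\<lambda>m. y (m + s)) k =
   varx_step nu ny Tini Ahat Bhat u y (k + s)"
  unfolding varx_step_def stack_shift by (simp add: algebra_simps)

lemma varx_step_cong:
  assumes "\<And>m. m \<in> {k - int Tini .. k} \<Longrightarrow> u m = u' m \<and> y m = y' m"
  shows "varx_step nu ny Tini Ahat Bhat u y k = varx_step nu ny Tini Ahat Bhat u' y' k"
proof -
  have "stack ny y (k - int Tini) (k - 1) = stack ny y' (k - int Tini) (k - 1)"
       "stack nu u (k - int Tini) (k - 1) = stack nu u' (k - int Tini) (k - 1)"
    using assms by (auto intro: stack_cong)
  thus ?thesis
    using assms[of k] unfolding varx_step_def by simp
qed

lemma varx_step_output_unique:
  assumes "varx_step nu ny Tini Ahat Bhat u y k" "varx_step nu ny Tini Ahat Bhat u' y' k"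
    and "\<And>m. m \<in> {k - int Tini .. k - 1} \<Longrightarrow> u m = u' m \<and> y m = y' m"
  shows "y k = y' k"
proof -
  have "stack ny y (k - int Tini) (k - 1) = stack ny y' (k - int Tini) (k - 1)"
       "stack nu u (k - int Tini) (k - 1) = stack nu u' (k - int Tini) (k - 1)"
    using assms(3) by (auto intro: stack_cong)
  thus ?thesis
    using assms(1,2) unfolding varx_step_def by simp
qed

lemma varx_outputs_unique:
  assumes u: "\<And>m. m \<in> {a - int Tini .. b} \<Longrightarrow> u m = u' m"
    and y_ini: "\<And>m. m \<in> {a - int Tini .. a - 1} \<Longrightarrow> y m = y' m"
    and dyn: "\<And>k. k \<in> {a .. b} \<Longrightarrow> varx_step nu ny Tini Ahat Bhat u y k"
    and dyn': "\<And>k. k \<in> {a .. b} \<Longrightarrow> varx_step nu ny Tini Ahat Bhat u' y' k"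
    and m: "m \<in> {a - int Tini .. b}"
  shows "y m = y' m"
proof -
  have "\<forall>m' \<in> {a - int Tini .. i}. y m' = y' m'" if "a - int Tini - 1 \<le> i" "i \<le> b" for i
    using that
  proof (induction i rule: int_ge_induct[consumes 1])
    case (step i)
    hence IH: "\<forall>m' \<in> {a - int Tini .. i}. y m' = y' m'" by simp
    have next_eq: "y (i + 1) = y' (i + 1)"
    proof (cases "i + 1 < a")
      case False
      with step IH show ?thesis
        by (intro varx_step_output_unique[OF dyn dyn']) (auto intro: u)
    qed (use y_ini step in auto)
    show ?case
    proof
      fix m' assume "m' \<in> {a - int Tini .. i + 1}"
      then consider "m' \<in> {a - int Tini .. i}" | "m' = i + 1" by fastforce
      then show "y m' = y' m'" using IH next_eq by cases auto
    qed
  qed simp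
  from this[of b] m show ?thesis by auto
qed

lemma varx_step_seq_lincomb:
  assumes Ahat: "Ahat \<in> carrier_mat ny (Tini * ny)" and Bhat: "Bhat \<in> carrier_mat ny (Tini * nu)"
    and dyn: "\<And>j. j \<in> J \<Longrightarrow> varx_step nu ny Tini Ahat Bhat (U j) (Y j) k"
  shows "varx_step nu ny Tini Ahat Bhat (seq_lincomb nu J c U) (seq_lincomb ny J c Y) k"
  unfolding varx_step_def
proof (rule eq_vecI)
  let ?win = "\<lambda>n z. stack n z (k - int Tini) (k - 1)"
  have win: "?win n z \<in> carrier_vec (Tini * n)" for n z
    using stack_carrier[of n z "k - int Tini" "k - 1"] by simp
  fix i assume "i < dim_vec (Ahat *\<^sub>v ?win ny (seq_lincomb ny J c Y) + Bhat *\<^sub>v ?win nu (seq_lincomb nu J c U))"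
  hence i: "i < ny" using Bhat by simp
  have A_lin: "(Ahat *\<^sub>v ?win ny (seq_lincomb ny J c Y)) $ i = (\<Sum>j\<in>J. c j * (Ahat *\<^sub>v ?win ny (Y j)) $ i)"
    by (rule mult_mat_vec_nth_lincomb[OF Ahat win win _ i]) (simp add: stack_seq_lincomb_nth)
  have B_lin: "(Bhat *\<^sub>v ?win nu (seq_lincomb nu J c U)) $ i = (\<Sum>j\<in>J. c j * (Bhat *\<^sub>v ?win nu (U j)) $ i)"
    by (rule mult_mat_vec_nth_lincomb[OF Bhat win win _ i]) (simp add: stack_seq_lincomb_nth)
  have "seq_lincomb ny J c Y k $ i = (\<Sum>j\<in>J. c j * Y j k $ i)"
    using i by (simp add: seq_lincomb_def)
  also have "\<dots> = (\<Sum>j\<in>J. c j * ((Ahat *\<^sub>v ?win ny (Y j)) $ i + (Bhat *\<^sub>v ?win nu (U j)) $ i))"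
    using dyn i Ahat Bhat by (intro sum.cong refl) (simp add: varx_step_def)
  also have "\<dots> = (Ahat *\<^sub>v ?win ny (seq_lincomb ny J c Y) + Bhat *\<^sub>v ?win nu (seq_lincomb nu J c U)) $ i"
    using i Ahat Bhat by (simp add: A_lin B_lin distrib_left sum.distrib)
  finally show "seq_lincomb ny J c Y k $ i =
      (Ahat *\<^sub>v ?win ny (seq_lincomb ny J c Y) + Bhat *\<^sub>v ?win nu (seq_lincomb nu J c U)) $ i" .
qed (use Bhat in \<open>simp add: seq_lincomb_def\<close>)

definition hankel_seq :: "nat \<Rightarrow> (int \<Rightarrow> real vec) \<Rightarrow> int \<Rightarrow> real vec \<Rightarrow> int \<Rightarrow> real vec"
  where "hankel_seq n z s g = seq_lincomb n {..<dim_vec g} (\<lambda>j. g $ j) (\<lambda>j m. z (m + (s + int j)))"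

lemma hankel_seq_carrier: "hankel_seq n z s g m \<in> carrier_vec n"
  unfolding hankel_seq_def by (rule seq_lincomb_carrier)

lemma hankel_carrier:
  assumes "c = nat (b - a + 2 - int M)"
  shows "hankel n M z a b \<in> carrier_mat (M * n) c"
  unfolding hankel_def assms by simp

lemma hankel_mult_vec:
  assumes g: "g \<in> carrier_vec (nat (b + 1 - int M))"
  shows "hankel n M z 1 b *\<^sub>v g =
    stack n (hankel_seq n z s g) (1 - s) (int M - s)"
proof (rule eq_vecI)
  let ?c = "nat (b + 1 - int M)"
  have H: "hankel n M z 1 b \<in> carrier_mat (M * n) ?c"
    by (rule hankel_carrier) simp
  have len: "nat (int M - s - (1 - s) + 1) = M" by simp
  fix i assume "i < dim_vec (stack n (hankel_seq n z s g) (1 - s) (int M - s))"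
  hence i: "i < M * n" by (simp only: dim_stack len)
  have "(hankel n M z 1 b *\<^sub>v g) $ i = (\<Sum>l<?c. g $ l * z (1 + int (i div n) + int l) $ (i mod n))"
    using mult_mat_vec_nth_sum[OF H g i] i by (simp add: hankel_def mult.commute)
  also have "\<dots> = stack n (hankel_seq n z s g) (1 - s) (int M - s) $ i"
    using i stack_nth_index(2)[of i "int M - s" "1 - s"] g
    unfolding stack_def hankel_seq_def seq_lincomb_def len by (simp add: algebra_simps)
  finally show "(hankel n M z 1 b *\<^sub>v g) $ i = stack n (hankel_seq n z s g) (1 - s) (int M - s) $ i" .
qed (simp add: hankel_def)

lemma varx_step_hankel_seq:
  assumes Ahat: "Ahat \<in> carrier_mat ny (Tini * ny)" and Bhat: "Bhat \<in> carrier_mat ny (Tini * nu)"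
    and data: "\<And>j. j < dim_vec g \<Longrightarrow> varx_step nu ny Tini Ahat Bhat u y (k + s + int j)"
  shows "varx_step nu ny Tini Ahat Bhat (hankel_seq nu u s g) (hankel_seq ny y s g) k"
  unfolding hankel_seq_def
  using data by (intro varx_step_seq_lincomb[OF Ahat Bhat]) (simp add: varx_step_shift add.assoc)

lemma varx_trajectories_parametrized:
  fixes H H_ini :: "real mat" and ug yg :: "real vec \<Rightarrow> int \<Rightarrow> real vec"
  assumes "a \<le> b"
    and dyn: "\<And>g k. g \<in> carrier_vec c \<Longrightarrow> k \<in> {a .. b} \<Longrightarrow> varx_step nu ny Tini Ahat Bhat (ug g) (yg g) k"
    and ug: "\<And>g m. ug g m \<in> carrier_vec nu" and yg: "\<And>g m. yg g m \<in> carrier_vec ny"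
    and H: "\<And>g. g \<in> carrier_vec c \<Longrightarrow>
      H *\<^sub>v g = stack nu (ug g) (a - int Tini) b @\<^sub>v stack ny (yg g) (a - int Tini) b"
    and H_ini: "\<And>g. g \<in> carrier_vec c \<Longrightarrow>
      H_ini *\<^sub>v g = stack nu (ug g) (a - int Tini) b @\<^sub>v stack ny (yg g) (a - int Tini) (a - 1)"
    and onto: "\<And>v. v \<in> carrier_vec (nat (b - a + 1 + int Tini) * nu + Tini * ny) \<Longrightarrow>
      \<exists>g \<in> carrier_vec c. H_ini *\<^sub>v g = v"
    and uy: "\<And>m. m \<in> {a - int Tini .. b} \<Longrightarrow> u m \<in> carrier_vec nu \<and> y m \<in> carrier_vec ny"
  shows "(\<forall>k \<in> {a .. b}. varx_step nu ny Tini Ahat Bhat u y k) \<longleftrightarrow>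
    (\<exists>g \<in> carrier_vec c. H *\<^sub>v g = stack nu u (a - int Tini) b @\<^sub>v stack ny y (a - int Tini) b)"
proof
  assume u_y_dyn: "\<forall>k \<in> {a .. b}. varx_step nu ny Tini Ahat Bhat u y k"
  have "nat (b - (a - int Tini) + 1) = nat (b - a + 1 + int Tini)"
    by (rule arg_cong[where f = nat]) simp
  hence "stack nu u (a - int Tini) b @\<^sub>v stack ny y (a - int Tini) (a - 1)
      \<in> carrier_vec (nat (b - a + 1 + int Tini) * nu + Tini * ny)"
    using stack_carrier[of nu u "a - int Tini" b] stack_carrier[of ny y "a - int Tini" "a - 1"]
    by (intro append_carrier_vec) simp_all
  then obtain g where g: "g \<in> carrier_vec c"
    and "H_ini *\<^sub>v g = stack nu u (a - int Tini) b @\<^sub>v stack ny y (a - int Tini) (a - 1)"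
    using onto by blast
  hence u_stack: "stack nu (ug g) (a - int Tini) b = stack nu u (a - int Tini) b"
    and y_ini_stack: "stack ny (yg g) (a - int Tini) (a - 1) = stack ny y (a - int Tini) (a - 1)"
    using H_ini[OF g] append_vec_eq[OF stack_carrier stack_carrier] by auto
  have u_eq: "ug g m = u m" if "m \<in> {a - int Tini .. b}" for m
    using stack_eqD[OF u_stack that] that uy ug by blast
  have "yg g m = y m" if "m \<in> {a - int Tini .. a - 1}" for m
    using stack_eqD[OF y_ini_stack that] that uy yg \<open>a \<le> b\<close> by simp
  hence "yg g m = y m" if "m \<in> {a - int Tini .. b}" for m
    using varx_outputs_unique[of a Tini b "ug g" u "yg g" y] that u_eq dyn[OF g] u_y_dyn by blast
  hence "H *\<^sub>v g = stack nu u (a - int Tini) b @\<^sub>v stack ny y (a - int Tini) b"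
    using H[OF g] u_eq stack_cong by metis
  with g show "\<exists>g \<in> carrier_vec c. H *\<^sub>v g = stack nu u (a - int Tini) b @\<^sub>v stack ny y (a - int Tini) b"
    by blast
next
  assume "\<exists>g \<in> carrier_vec c. H *\<^sub>v g = stack nu u (a - int Tini) b @\<^sub>v stack ny y (a - int Tini) b"
  then obtain g where g: "g \<in> carrier_vec c"
    and "H *\<^sub>v g = stack nu u (a - int Tini) b @\<^sub>v stack ny y (a - int Tini) b" by blast
  hence "stack nu (ug g) (a - int Tini) b = stack nu u (a - int Tini) b"
    and "stack ny (yg g) (a - int Tini) b = stack ny y (a - int Tini) b"
    using H[OF g] append_vec_eq[OF stack_carrier stack_carrier] by auto
  hence "ug g m = u m \<and> yg g m = y m" if "m \<in> {a - int Tini .. b}" for m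
    using that uy ug yg stack_eqD by metis
  thus "\<forall>k \<in> {a .. b}. varx_step nu ny Tini Ahat Bhat u y k"
    using dyn[OF g] varx_step_cong[of _ Tini "ug g" u "yg g" y] by auto
qed

theorem lemma2:
  fixes nx nu ny Tini N T :: nat
    and A B C Ahat Bhat :: "real mat"
    and uud yud :: "int \<Rightarrow> real vec"
  assumes dims: "0 < nx" "0 < nu" "0 < ny"
    and A: "A \<in> carrier_mat nx nx" and B: "B \<in> carrier_mat nx nu" and C: "C \<in> carrier_mat ny nx"
    and ctrb: "controllable nx nu A B"
    and obsv: "observable nx ny A C"
    and Tini: "lag nx ny A C \<le> Tini"
    and Ahat: "Ahat \<in> carrier_mat ny (Tini * ny)"
    and Bhat: "Bhat \<in> carrier_mat ny (Tini * nu)"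
    and equiv: "\<And>x u. (\<forall>k. x k \<in> carrier_vec nx \<and> u k \<in> carrier_vec nu \<and>
                          x (k + 1) = A *\<^sub>v x k + B *\<^sub>v u k)
               \<Longrightarrow> (\<forall>k. varx_step nu ny Tini Ahat Bhat u (\<lambda>j. C *\<^sub>v x j) k)"
    and data_dim: "\<And>k. k \<in> {1 - int Tini .. int T} \<Longrightarrow>
                         uud k \<in> carrier_vec nu \<and> yud k \<in> carrier_vec ny"
    and data_dyn: "\<And>k. k \<in> {1 .. int T} \<Longrightarrow> varx_step nu ny Tini Ahat Bhat uud yud k"
    and N: "0 < N"
    and rank: "mrank ((Tini + N) * nu + Tini * ny)
                 (vstack (hankel nu (Tini + N) uud 1 (int T))
                         (hankel ny Tini yud 1 (int T - int N)))
               = (Tini + N) * nu + Tini * ny"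
  shows "\<forall>u y. (\<forall>k \<in> {1 - int Tini .. int N}. u k \<in> carrier_vec nu \<and> y k \<in> carrier_vec ny) \<longrightarrow>
           ((\<forall>k \<in> {1 .. int N}. varx_step nu ny Tini Ahat Bhat u y k) \<longleftrightarrow>
            (\<exists>g \<in> carrier_vec (T - N - Tini + 1).
               vstack (hankel nu (Tini + N) uud 1 (int T)) (hankel ny (Tini + N) yud 1 (int T)) *\<^sub>v g
               = stack nu u (1 - int Tini) (int N) @\<^sub>v stack ny y (1 - int Tini) (int N)))"
proof (intro allI impI)
  fix u y :: "int \<Rightarrow> real vec"
  assume uy: "\<forall>k \<in> {1 - int Tini .. int N}. u k \<in> carrier_vec nu \<and> y k \<in> carrier_vec ny"
  define c where "c = nat (int T + 1 - int (Tini + N))"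
  let ?Hu = "hankel nu (Tini + N) uud 1 (int T)"
  let ?Hy = "hankel ny (Tini + N) yud 1 (int T)"
  let ?Hy_ini = "hankel ny Tini yud 1 (int T - int N)"
  let ?ug = "hankel_seq nu uud (int Tini)"
  let ?yg = "hankel_seq ny yud (int Tini)"
  have Hu: "?Hu \<in> carrier_mat ((Tini + N) * nu) c"
    and Hy: "?Hy \<in> carrier_mat ((Tini + N) * ny) c"
    and Hy_ini: "?Hy_ini \<in> carrier_mat (Tini * ny) c"
    by (rule hankel_carrier, simp add: c_def)+
  have "0 < (Tini + N) * nu"
    using N dims by simp
  hence "0 < c"
    using mrank_le_dim_col[OF vstack_carrier[OF Hu Hy_ini]] rank by linarith
  hence TN: "Tini + N \<le> T" and c: "c = T - N - Tini + 1"
    unfolding c_def by linarith+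
  have traj: "vstack ?Hu ?Hy *\<^sub>v g =
      stack nu (?ug g) (1 - int Tini) (int N) @\<^sub>v stack ny (?yg g) (1 - int Tini) (int N)"
    if "g \<in> carrier_vec c" for g
    using vstack_mult_vec[OF Hu Hy that] that
      hankel_mult_vec[of g "int T" "Tini + N" nu uud "int Tini"]
      hankel_mult_vec[of g "int T" "Tini + N" ny yud "int Tini"] by (simp add: c_def)
  have c_ini: "nat (int T - int N + 1 - int Tini) = c"
    unfolding c_def by (rule arg_cong[where f = nat]) simp
  have traj_ini: "vstack ?Hu ?Hy_ini *\<^sub>v g =
      stack nu (?ug g) (1 - int Tini) (int N) @\<^sub>v stack ny (?yg g) (1 - int Tini) 0"
    if "g \<in> carrier_vec c" for g
    using vstack_mult_vec[OF Hu Hy_ini that] that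
      hankel_mult_vec[of g "int T" "Tini + N" nu uud "int Tini"]
      hankel_mult_vec[of g "int T - int N" Tini ny yud "int Tini", unfolded c_ini] by (simp add: c_def)
  have dyn: "varx_step nu ny Tini Ahat Bhat (?ug g) (?yg g) k"
    if "g \<in> carrier_vec c" "k \<in> {1 .. int N}" for g k
    using that c TN by (intro varx_step_hankel_seq[OF Ahat Bhat] data_dyn) auto
  have onto: "\<exists>g \<in> carrier_vec c. vstack ?Hu ?Hy_ini *\<^sub>v g = v"
    if "v \<in> carrier_vec (nat (int N - 1 + 1 + int Tini) * nu + Tini * ny)" for v
    using mrank_full_row_surj[OF vstack_carrier[OF Hu Hy_ini] rank] that
    by (simp add: nat_int_add add.commute)
  show "(\<forall>k \<in> {1 .. int N}. varx_step nu ny Tini Ahat Bhat u y k) \<longleftrightarrow>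
      (\<exists>g \<in> carrier_vec (T - N - Tini + 1). vstack ?Hu ?Hy *\<^sub>v g
        = stack nu u (1 - int Tini) (int N) @\<^sub>v stack ny y (1 - int Tini) (int N))"
    unfolding c[symmetric]
    by (rule varx_trajectories_parametrized[where H_ini = "vstack ?Hu ?Hy_ini"])
      (use N traj traj_ini dyn onto uy in \<open>simp_all add: hankel_seq_carrier\<close>)
qed

end
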